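(* Let $R$ be a unital commutative Hausdorff topological ring with dense group of units, $E\in\mathrm{TopSMod}_R$ and $\lambda\in\Lambda^\infty$. A subset $U\subset\underline E(\lambda)$ is open in the DeWitt topology if and only if $U=\underline E(\eta)(V)+\underline E(\lambda)^+$ for some open $V\subset E_0$; likewise $U\subset E\otimes\lambda$ is DeWitt-open if and only if $U=V\otimes1+E\otimes\lambda^+$ for some open $V\subset E$. The DeWitt topology on $\underline E(\lambda)$ is a $\lambda_0$-module topology, and the DeWitt topology on $E\otimes\lambda$ is a $\lambda$-module topology.
   Context: $\lambda^n=R[\theta_1,\dots,\theta_n]$ ($n\in\mathbb N$, $\lambda^0=R$) and $\lambda^\infty=R[\theta_i:i\in\mathbb N]$ are Grassmann algebras on odd generators ($\lambda^n=\bigoplus_IR\theta_I$ product topology; $\lambda^\infty$ direct limit topology). $\Lambda^\infty$: category with objects these algebras and morphisms even unital $R$-algebra morphisms. For $\lambda\in\Lambda^\infty$, $\varepsilon:\lambda\to R$ is the morphism killing all $\theta_i$, $\eta:R\to\lambda$ the unit map, $\lambda^+=\ker\varepsilon$. $\mathrm{TopSMod}_R$: Hausdorff graded topological $R$-modules $E=E_0\oplus E_1$. $E\otimes\lambda^N=\prod_{|I|\le N}E\theta_I$, $E\otimes\lambda^\infty=\varinjlim_NE\otimes\lambda^N$; $\underline E(\lambda)=(E\otimes\lambda)_0=E_0\otimes\lambda_0\oplus E_1\otimes\lambda_1$, $\underline E(\varphi)=(\mathrm{id}\otimes\varphi)|$, $\underline E(\lambda)^+=(E\otimes\lambda^+)_0$.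 The DeWitt topology on $\underline E(\lambda)$ (resp. $E\otimes\lambda$) is the coarsest topology for which $\underline E(\varepsilon):\underline E(\lambda)\to E_0$ (resp. $\mathrm{id}\otimes\varepsilon:E\otimes\lambda\to E$) is continuous. A $\lambda_0$-module topology is one making addition and scalar multiplication $\lambda_0\times\underline E(\lambda)\to\underline E(\lambda)$ continuous (with the given topology on $\lambda_0$). *)

theory Defs
  imports "HOL-Analysis.Analysis" "HOL-Library.Extended_Nat"
begin

(* Grassmann algebras: the basis monomial theta_I is indexed by a finite set I of
   generator indices (generators theta_0, theta_1, ...).  An element of
   lambda^n (resp. E (x) lambda^n) is a coefficient function  nat set => R
   (resp. nat set => E) vanishing outside Pow {..<n}.  lambda^infinity is
   the union (direct limit) of these.  m :: enat selects lambda^n (m = enat n)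
   or lambda^infinity (m = \<infinity>). *)

definition gcar :: "enat \<Rightarrow> (nat set \<Rightarrow> 'v::zero) set" where
  "gcar m = {f. \<exists>n. enat n \<le> m \<and> (\<forall>I. f I \<noteq> 0 \<longrightarrow> I \<subseteq> {..<n})}"

(* sign of theta_I theta_J = gsign I J * theta_(I Un J) for disjoint I, J *)
definition gsign :: "nat set \<Rightarrow> nat set \<Rightarrow> int" where
  "gsign I J = (-1) ^ card {(i, j). i \<in> I \<and> j \<in> J \<and> j < i}"

definition geven :: "(nat set \<Rightarrow> 'v::zero) set" where
  "geven = {f. \<forall>I. f I \<noteq> 0 \<longrightarrow> even (card I)}"

definition lambda0 :: "enat \<Rightarrow> (nat set \<Rightarrow> 'r::zero) set" where
  "lambda0 m = gcar m \<inter> geven"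

(* topology of lambda: product topology for lambda^n, direct limit topology
   (final topology w.r.t. the inclusions lambda^n -> lambda^infinity) for lambda^infinity *)
definition lambda_top :: "enat \<Rightarrow> (nat set \<Rightarrow> 'r::{zero,topological_space}) topology" where
  "lambda_top m = (case m of
      enat n \<Rightarrow> subtopology euclidean (gcar (enat n))
    | \<infinity> \<Rightarrow> topology (\<lambda>U. U \<subseteq> gcar \<infinity> \<and>
          (\<forall>n. openin (subtopology euclidean (gcar (enat n))) (U \<inter> gcar (enat n)))))"

(* E = E_0 (+) E_1 is modelled as 'a \<times> 'b (product topology).
   E (x) lambda: functions nat set => 'a \<times> 'b in gcar m.
   Underline E(lambda) = (E (x) lambda)_0 = E_0 (x) lambda_0 (+) E_1 (x) lambda_1 : *)
definition Eul :: "enat \<Rightarrow> (nat set \<Rightarrow> ('a::zero \<times> 'b::zero)) set" where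
  "Eul m = {f \<in> gcar m. \<forall>I. (odd (card I) \<longrightarrow> fst (f I) = 0) \<and> (even (card I) \<longrightarrow> snd (f I) = 0)}"

definition Eul_plus :: "enat \<Rightarrow> (nat set \<Rightarrow> ('a::zero \<times> 'b::zero)) set" where
  "Eul_plus m = {f \<in> Eul m. f {} = 0}"

definition Etens_plus :: "enat \<Rightarrow> (nat set \<Rightarrow> 'v::zero) set" where
  "Etens_plus m = {f \<in> gcar m. f {} = 0}"

(* v (x) 1, i.e. the map  id (x) eta;  for v in E_0 this is  Underline E(eta)(v) *)
definition tens1 :: "'v::zero \<Rightarrow> (nat set \<Rightarrow> 'v)" where
  "tens1 v = (\<lambda>I. if I = {} then v else 0)"

definition fadd :: "(nat set \<Rightarrow> 'v::plus) \<Rightarrow> (nat set \<Rightarrow> 'v) \<Rightarrow> (nat set \<Rightarrow> 'v)" where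
  "fadd f g = (\<lambda>I. f I + g I)"

(* action of a \<in> lambda on E (x) lambda by left multiplication on the lambda factor:
   theta_I . (e (x) theta_J) = e (x) theta_I theta_J *)
definition gact :: "('r::comm_ring_1 \<Rightarrow> 'a::comm_monoid_add \<Rightarrow> 'a) \<Rightarrow> ('r \<Rightarrow> 'b::comm_monoid_add \<Rightarrow> 'b)
     \<Rightarrow> (nat set \<Rightarrow> 'r) \<Rightarrow> (nat set \<Rightarrow> 'a \<times> 'b) \<Rightarrow> (nat set \<Rightarrow> 'a \<times> 'b)" where
  "gact sc0 sc1 a f = (\<lambda>K. \<Sum>I\<in>Pow K.
      (sc0 (of_int (gsign I (K - I)) * a I) (fst (f (K - I))),
       sc1 (of_int (gsign I (K - I)) * a I) (snd (f (K - I)))))"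

(* DeWitt topology on Underline E(lambda): coarsest topology making
   Underline E(epsilon) : f \<mapsto> (E_0-component of f {}) continuous *)
definition dewitt_ul :: "enat \<Rightarrow> (nat set \<Rightarrow> ('a::{zero,topological_space} \<times> 'b::zero)) topology" where
  "dewitt_ul m = pullback_topology (Eul m) (\<lambda>f. fst (f {})) euclidean"

(* DeWitt topology on E (x) lambda: coarsest topology making id (x) epsilon continuous *)
definition dewitt_tens :: "enat \<Rightarrow> (nat set \<Rightarrow> 'v::{zero,topological_space}) topology" where
  "dewitt_tens m = pullback_topology (gcar m) (\<lambda>f. f {}) euclidean"

end

theory Submission
  imports Defs "HOL-Library.Product_Plus"
begin

text \<open>The DeWitt topologies are initial for the body map \<open>f \<mapsto> f {}\<close>, so their open sets are
  the preimages of open sets of \<open>E\<close>; such a preimage is \<open>V \<otimes> 1 + E \<otimes> \<lambda>\<^sup>+\<close> because every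
  \<open>f\<close> splits as \<open>f {} \<otimes> 1\<close> plus a bodiless part. Continuity into an initial topology only
  has to be checked after composing with the body map, and the body of \<open>x + y\<close> is
  \<open>x {} + y {}\<close> while the body of \<open>a \<cdot> f\<close> is \<open>a {} \<cdot> f {}\<close>, as \<open>\<theta>\<^sub>I \<theta>\<^sub>J\<close> has a body only
  for \<open>I = J = {}\<close>. Evaluation at \<open>{}\<close> is continuous on \<open>\<lambda>\<^sup>n\<close> and on the direct limit
  \<open>\<lambda>\<^sup>\<infinity>\<close>, so both bodies depend continuously on the arguments.\<close>

instance prod :: (topological_monoid_add, topological_monoid_add) topological_monoid_add
proof
  fix a b :: "'a \<times> 'b"
  have fst: "(fst \<longlongrightarrow> a) (nhds a \<times>\<^sub>F nhds b)" and snd: "(snd \<longlongrightarrow> b) (nhds a \<times>\<^sub>F nhds b)"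
    by (simp_all add: filterlim_fst filterlim_snd)
  have "((\<lambda>x. (fst (fst x) + fst (snd x), snd (fst x) + snd (snd x)))
          \<longlongrightarrow> (fst a + fst b, snd a + snd b)) (nhds a \<times>\<^sub>F nhds b)"
    by (intro tendsto_intros fst snd)
  then show "((\<lambda>x. fst x + snd x) \<longlongrightarrow> a + b) (nhds a \<times>\<^sub>F nhds b)"
    by (simp add: plus_prod_def case_prod_beta)
qed

lemma continuous_map_euclidean_add:
  fixes f g :: "'x \<Rightarrow> 'v::topological_monoid_add"
  shows "continuous_map X euclidean f \<Longrightarrow> continuous_map X euclidean g \<Longrightarrow>
    continuous_map X euclidean (\<lambda>x. f x + g x)"
  by (simp add: continuous_map_atin tendsto_add)

lemma continuous_map_euclidean_compose2:
  assumes "continuous_map X euclidean p" "continuous_map X euclidean q"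
    and "continuous_on UNIV (\<lambda>z. F (fst z) (snd z))"
  shows "continuous_map X euclidean (\<lambda>x. F (p x) (q x))"
proof -
  have "continuous_map X (prod_topology euclidean euclidean) (\<lambda>x. (p x, q x))"
    using assms(1,2) by (intro continuous_map_pairedI)
  then have "continuous_map X euclidean (\<lambda>x. (p x, q x))"
    by simp
  moreover have "continuous_map euclidean euclidean (\<lambda>z. F (fst z) (snd z))"
    using assms(3) by simp
  ultimately have "continuous_map X euclidean ((\<lambda>z. F (fst z) (snd z)) \<circ> (\<lambda>x. (p x, q x)))"
    by (rule continuous_map_compose)
  then show ?thesis
    by (simp add: o_def)
qed

lemma gcar_enat_subset_infinity: "gcar (enat n) \<subseteq> gcar \<infinity>"
  unfolding gcar_def by auto

lemma gcar_fadd: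
  fixes f g :: "nat set \<Rightarrow> 'v::monoid_add"
  assumes "f \<in> gcar m" "g \<in> gcar m"
  shows "fadd f g \<in> gcar m"
proof -
  obtain n1 n2 where f: "enat n1 \<le> m" "\<forall>I. f I \<noteq> 0 \<longrightarrow> I \<subseteq> {..<n1}"
    and g: "enat n2 \<le> m" "\<forall>I. g I \<noteq> 0 \<longrightarrow> I \<subseteq> {..<n2}"
    using assms unfolding gcar_def by blast
  have "enat (max n1 n2) \<le> m"
    using f g by (simp add: max_def)
  moreover have "I \<subseteq> {..<max n1 n2}" if "fadd f g I \<noteq> 0" for I
  proof -
    have "f I \<noteq> 0 \<or> g I \<noteq> 0"
      using that unfolding fadd_def by auto
    then show ?thesis
      using f g by fastforce
  qed
  ultimately show ?thesis
    unfolding gcar_def by blast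
qed

lemma gcar_tens1: "tens1 v \<in> gcar m"
  unfolding gcar_def tens1_def by (auto intro!: exI[of _ 0] simp: zero_enat_def[symmetric])

lemma gcar_fun_upd_zero: "f \<in> gcar m \<Longrightarrow> f(I := 0) \<in> gcar m"
  unfolding gcar_def by auto

lemma Eul_fadd:
  fixes f g :: "nat set \<Rightarrow> 'a::monoid_add \<times> 'b::monoid_add"
  shows "f \<in> Eul m \<Longrightarrow> g \<in> Eul m \<Longrightarrow> fadd f g \<in> Eul m"
  unfolding Eul_def using gcar_fadd by (auto simp: fadd_def)

lemma tens1_in_Eul: "tens1 (v, 0) \<in> Eul m"
  unfolding Eul_def using gcar_tens1 by (auto simp: tens1_def)

lemma tens1_plus_Eul_plus_eq:
  "{fadd (tens1 (v, 0)) x | v x. v \<in> V \<and> x \<in> Eul_plus m}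
     = {f \<in> (Eul m :: (nat set \<Rightarrow> 'a::comm_monoid_add \<times> 'b::comm_monoid_add) set). fst (f {}) \<in> V}"
proof (intro set_eqI iffI)
  fix f :: "nat set \<Rightarrow> 'a \<times> 'b"
  assume "f \<in> {fadd (tens1 (v, 0)) x | v x. v \<in> V \<and> x \<in> Eul_plus m}"
  then obtain v x where f: "f = fadd (tens1 (v, 0)) x" "v \<in> V" "x \<in> Eul_plus m"
    by blast
  then have "f \<in> Eul m"
    using Eul_fadd tens1_in_Eul unfolding Eul_plus_def by blast
  with f show "f \<in> {f \<in> Eul m. fst (f {}) \<in> V}"
    by (auto simp: Eul_plus_def fadd_def tens1_def)
next
  fix f :: "nat set \<Rightarrow> 'a \<times> 'b"
  assume "f \<in> {f \<in> Eul m. fst (f {}) \<in> V}"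
  then have f: "f \<in> Eul m" "fst (f {}) \<in> V"
    by auto
  then have "f = fadd (tens1 (fst (f {}), 0)) (f({} := 0))"
    by (auto simp: Eul_def fadd_def tens1_def fun_eq_iff prod_eq_iff)
  moreover have "f({} := 0) \<in> Eul_plus m"
    using f gcar_fun_upd_zero unfolding Eul_plus_def Eul_def by auto
  ultimately show "f \<in> {fadd (tens1 (v, 0)) x | v x. v \<in> V \<and> x \<in> Eul_plus m}"
    using f by blast
qed

lemma tens1_plus_Etens_plus_eq:
  "{fadd (tens1 v) x | v x. v \<in> V \<and> x \<in> Etens_plus m}
     = {f \<in> (gcar m :: (nat set \<Rightarrow> 'v::comm_monoid_add) set). f {} \<in> V}"
proof (intro set_eqI iffI)
  fix f :: "nat set \<Rightarrow> 'v"
  assume "f \<in> {fadd (tens1 v) x | v x. v \<in> V \<and> x \<in> Etens_plus m}"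
  then obtain v x where f: "f = fadd (tens1 v) x" "v \<in> V" "x \<in> Etens_plus m"
    by blast
  then have "f \<in> gcar m"
    using gcar_fadd gcar_tens1 unfolding Etens_plus_def by blast
  with f show "f \<in> {f \<in> gcar m. f {} \<in> V}"
    by (auto simp: Etens_plus_def fadd_def tens1_def)
next
  fix f :: "nat set \<Rightarrow> 'v"
  assume "f \<in> {f \<in> gcar m. f {} \<in> V}"
  then have f: "f \<in> gcar m" "f {} \<in> V"
    by auto
  then have "f = fadd (tens1 (f {})) (f({} := 0))"
    by (auto simp: fadd_def tens1_def fun_eq_iff)
  moreover have "f({} := 0) \<in> Etens_plus m"
    using f gcar_fun_upd_zero unfolding Etens_plus_def by auto
  ultimately show "f \<in> {fadd (tens1 v) x | v x. v \<in> V \<and> x \<in> Etens_plus m}"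
    using f by blast
qed

lemma istopology_lambda_top_infinity:
  "istopology (\<lambda>U. U \<subseteq> gcar \<infinity> \<and>
     (\<forall>n. openin (top_of_set (gcar (enat n))) (U \<inter> (gcar (enat n) :: (nat set \<Rightarrow> 'r::{zero,topological_space}) set))))"
  (is "istopology ?P")
  unfolding istopology_def
proof (rule conjI; intro allI impI)
  fix S T
  assume "?P S" "?P T"
  moreover have "S \<inter> T \<inter> gcar (enat n) = (S \<inter> gcar (enat n)) \<inter> (T \<inter> gcar (enat n))" for n
    by auto
  ultimately show "?P (S \<inter> T)"
    by (metis (no_types, lifting) inf.coboundedI1 openin_Int)
next
  fix K
  assume K: "\<forall>S\<in>K. ?P S"
  have "openin (top_of_set (gcar (enat n))) (\<Union>K \<inter> gcar (enat n))" for n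
  proof -
    have "\<Union>K \<inter> gcar (enat n) = (\<Union>S\<in>K. S \<inter> gcar (enat n))"
      by auto
    moreover have "openin (top_of_set (gcar (enat n))) (\<Union>S\<in>K. S \<inter> gcar (enat n))"
      using K by (intro openin_Union) auto
    ultimately show ?thesis
      by simp
  qed
  with K show "?P (\<Union>K)"
    by auto
qed

lemma openin_lambda_top_infinity:
  "openin (lambda_top \<infinity>) U \<longleftrightarrow>
     U \<subseteq> gcar \<infinity> \<and> (\<forall>n. openin (top_of_set (gcar (enat n))) (U \<inter> gcar (enat n)))"
  unfolding lambda_top_def enat.case
  by (subst topology_inverse'[OF istopology_lambda_top_infinity]) (rule refl)

lemma topspace_lambda_top: "topspace (lambda_top m) = gcar m"
proof (cases m)
  case (enat n)
  then show ?thesis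
    by (simp add: lambda_top_def)
next
  case infinity
  have "gcar \<infinity> \<inter> gcar (enat n) = gcar (enat n)" for n
    using gcar_enat_subset_infinity by blast
  then have "openin (lambda_top \<infinity>) (gcar \<infinity>)"
    unfolding openin_lambda_top_infinity by (metis openin_topspace topspace_euclidean_subtopology order.refl)
  then have "gcar \<infinity> \<subseteq> topspace (lambda_top \<infinity>)"
    by (rule openin_subset)
  moreover have "topspace (lambda_top \<infinity>) \<subseteq> gcar \<infinity>"
    using openin_topspace openin_lambda_top_infinity by blast
  ultimately show ?thesis
    using infinity by blast
qed

lemma continuous_map_lambda_top_eval:
  "continuous_map (lambda_top m) euclidean (\<lambda>f::nat set \<Rightarrow> 'r::{zero,topological_space}. f i)"
proof -
  have eval: "continuous_on UNIV (\<lambda>f::nat set \<Rightarrow> 'r. f i)"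
    by (metis UNIV_I continuous_map_iff_continuous2 continuous_map_product_projection euclidean_product_topology)
  show ?thesis
  proof (cases m)
    case (enat n)
    then show ?thesis
      using continuous_on_subset[OF eval subset_UNIV] by (simp add: lambda_top_def)
  next
    case infinity
    have "openin (lambda_top \<infinity>) {f \<in> gcar \<infinity>. f i \<in> W}" if "open W" for W :: "'r set"
      unfolding openin_lambda_top_infinity
    proof (intro conjI allI)
      fix n
      have "{f \<in> gcar \<infinity>. f i \<in> W} \<inter> gcar (enat n) = gcar (enat n) \<inter> (\<lambda>f. f i) -` W"
        using gcar_enat_subset_infinity by blast
      moreover have "open ((\<lambda>f::nat set \<Rightarrow> 'r. f i) -` W)"
        using eval \<open>open W\<close> by (simp add: open_vimage)
      ultimately show "openin (top_of_set (gcar (enat n))) ({f \<in> gcar \<infinity>. f i \<in> W} \<inter> gcar (enat n))"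
        by (simp add: openin_open_Int)
    qed auto
    then show ?thesis
      using infinity by (auto simp: continuous_map_def topspace_lambda_top)
  qed
qed

lemma topspace_dewitt_ul: "topspace (dewitt_ul m) = Eul m"
  unfolding dewitt_ul_def topspace_pullback_topology by simp

lemma topspace_dewitt_tens: "topspace (dewitt_tens m) = gcar m"
  unfolding dewitt_tens_def topspace_pullback_topology by simp

lemma openin_dewitt_ul_iff:
  fixes U :: "(nat set \<Rightarrow> 'a::{comm_monoid_add,topological_space} \<times> 'b::comm_monoid_add) set"
  assumes "U \<subseteq> Eul m"
  shows "openin (dewitt_ul m) U \<longleftrightarrow>
    (\<exists>V. open V \<and> U = {fadd (tens1 (v, 0)) x | v x. v \<in> V \<and> x \<in> Eul_plus m})"
  unfolding tens1_plus_Eul_plus_eq dewitt_ul_def openin_pullback_topology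
  using assms by (auto simp: vimage_def)

lemma openin_dewitt_tens_iff:
  fixes U :: "(nat set \<Rightarrow> 'v::{comm_monoid_add,topological_space}) set"
  assumes "U \<subseteq> gcar m"
  shows "openin (dewitt_tens m) U \<longleftrightarrow>
    (\<exists>V. open V \<and> U = {fadd (tens1 v) x | v x. v \<in> V \<and> x \<in> Etens_plus m})"
  unfolding tens1_plus_Etens_plus_eq dewitt_tens_def openin_pullback_topology
  using assms by (auto simp: vimage_def)

lemma continuous_map_dewitt_ul_body:
  "continuous_map (dewitt_ul m) euclidean (\<lambda>f::nat set \<Rightarrow> 'a::{zero,topological_space} \<times> 'b::zero. fst (f {}))"
  unfolding dewitt_ul_def
  using continuous_map_pullback[OF continuous_map_id, of "Eul m" "\<lambda>f::nat set \<Rightarrow> 'a \<times> 'b. fst (f {})"]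
  by (simp add: o_def)

lemma continuous_map_dewitt_tens_body:
  "continuous_map (dewitt_tens m) euclidean (\<lambda>f::nat set \<Rightarrow> 'v::{zero,topological_space}. f {})"
  unfolding dewitt_tens_def
  using continuous_map_pullback[OF continuous_map_id, of "gcar m" "\<lambda>f::nat set \<Rightarrow> 'v. f {}"]
  by (simp add: o_def)

lemma continuous_map_into_dewitt_ul:
  "g ` topspace X \<subseteq> Eul m \<Longrightarrow> continuous_map X euclidean (\<lambda>x. fst (g x {})) \<Longrightarrow>
    continuous_map X (dewitt_ul m) g"
  unfolding dewitt_ul_def by (rule continuous_map_pullback') (auto simp: o_def)

lemma continuous_map_into_dewitt_tens:
  "g ` topspace X \<subseteq> gcar m \<Longrightarrow> continuous_map X euclidean (\<lambda>x. g x {}) \<Longrightarrow>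
    continuous_map X (dewitt_tens m) g"
  unfolding dewitt_tens_def by (rule continuous_map_pullback') (auto simp: o_def)

lemma gact_empty: "gact sc0 sc1 a f {} = (sc0 (a {}) (fst (f {})), sc1 (a {}) (snd (f {})))"
  unfolding gact_def gsign_def by simp

lemma gact_gcar:
  assumes "module sc0" "module sc1" and "a \<in> gcar m" "f \<in> gcar m"
  shows "gact sc0 sc1 a f \<in> gcar m"
proof -
  interpret M0: module sc0 by fact
  interpret M1: module sc1 by fact
  obtain n1 n2 where a: "enat n1 \<le> m" "\<forall>I. a I \<noteq> 0 \<longrightarrow> I \<subseteq> {..<n1}"
    and f: "enat n2 \<le> m" "\<forall>I. f I \<noteq> 0 \<longrightarrow> I \<subseteq> {..<n2}"
    using assms(3,4) unfolding gcar_def by blast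
  have "K \<subseteq> {..<max n1 n2}" if "gact sc0 sc1 a f K \<noteq> 0" for K
  proof (rule ccontr)
    assume "\<not> K \<subseteq> {..<max n1 n2}"
    then obtain k where k: "k \<in> K" "n1 \<le> k" "n2 \<le> k"
      by (auto simp: subset_iff less_max_iff_disj not_less)
    \<comment> \<open>each term \<open>\<theta>\<^sub>I \<theta>\<^sub>K\<^sub>-\<^sub>I\<close> contains \<open>\<theta>\<^sub>k\<close>, which occurs neither in \<open>a\<close> nor in \<open>f\<close>\<close>
    have a0: "a I = 0" if "k \<in> I" for I
      using a(2) k(2) that by (metis lessThan_iff not_le subsetD)
    have f0: "f J = 0" if "k \<in> J" for J
      using f(2) k(3) that by (metis lessThan_iff not_le subsetD)
    have "sc0 (c * a I) (fst (f (K - I))) = 0 \<and> sc1 (c * a I) (snd (f (K - I))) = 0" for I c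
      using a0[of I] f0[of "K - I"] k(1) by (cases "k \<in> I") simp_all
    then have "gact sc0 sc1 a f K = 0"
      unfolding gact_def by (intro sum.neutral) (simp add: zero_prod_def)
    with that show False
      by simp
  qed
  moreover have "enat (max n1 n2) \<le> m"
    using a f by (simp add: max_def)
  ultimately show ?thesis
    unfolding gcar_def by blast
qed

lemma even_card_Diff_iff:
  "finite K \<Longrightarrow> I \<subseteq> K \<Longrightarrow> even (card I) \<Longrightarrow> even (card (K - I)) \<longleftrightarrow> even (card K)"
  by (metis card_Diff_subset card_mono dvd_diffD dvd_diff_nat finite_subset)

lemma gact_Eul:
  assumes "module sc0" "module sc1" and a: "a \<in> lambda0 m" and f: "f \<in> Eul m"
  shows "gact sc0 sc1 a f \<in> Eul m"
proof -
  interpret M0: module sc0 by fact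
  interpret M1: module sc1 by fact
  have "(odd (card K) \<longrightarrow> fst (gact sc0 sc1 a f K) = 0) \<and>
        (even (card K) \<longrightarrow> snd (gact sc0 sc1 a f K) = 0)" for K
  proof (cases "finite K")
    case False
    then show ?thesis
      unfolding gact_def by simp
  next
    case True
    have parity: "even (card (K - I)) = even (card K)" if "I \<subseteq> K" "a I \<noteq> 0" for I
      using a that True even_card_Diff_iff unfolding lambda0_def geven_def by blast
    have "fst (f J) = 0" if "odd (card J)" for J
      using f that unfolding Eul_def by blast
    moreover have "snd (f J) = 0" if "even (card J)" for J
      using f that unfolding Eul_def by blast
    ultimately have "(odd (card K) \<longrightarrow> sc0 (c * a I) (fst (f (K - I))) = 0) \<and>
                 (even (card K) \<longrightarrow> sc1 (c * a I) (snd (f (K - I))) = 0)"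
      if "I \<subseteq> K" for I c
      using parity[OF that] by (cases "a I = 0") simp_all
    then show ?thesis
      unfolding gact_def fst_sum snd_sum by (simp add: sum.neutral)
  qed
  moreover have "gact sc0 sc1 a f \<in> gcar m"
    using gact_gcar assms unfolding lambda0_def Eul_def by blast
  ultimately show ?thesis
    unfolding Eul_def by auto
qed

lemma continuous_map_dewitt_ul_fadd:
  "continuous_map (prod_topology (dewitt_ul m) (dewitt_ul m)) (dewitt_ul m)
     (\<lambda>(x, y). fadd x (y :: nat set \<Rightarrow> 'a::topological_monoid_add \<times> 'b::monoid_add))"
proof (rule continuous_map_into_dewitt_ul)
  show "(\<lambda>(x, y). fadd x y) ` topspace (prod_topology (dewitt_ul m) (dewitt_ul m))
          \<subseteq> (Eul m :: (nat set \<Rightarrow> 'a \<times> 'b) set)"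
    by (auto simp: topspace_dewitt_ul intro: Eul_fadd)
  have "continuous_map (prod_topology (dewitt_ul m) (dewitt_ul m)) euclidean
          (\<lambda>p. fst (fst p {}) + fst ((snd p :: nat set \<Rightarrow> 'a \<times> 'b) {}))"
    by (intro continuous_map_euclidean_add continuous_map_dewitt_ul_body
        continuous_map_compose[OF continuous_map_fst, unfolded o_def]
        continuous_map_compose[OF continuous_map_snd, unfolded o_def])
  then show "continuous_map (prod_topology (dewitt_ul m) (dewitt_ul m)) euclidean
          (\<lambda>p. fst ((case p of (x, y) \<Rightarrow> fadd x (y :: nat set \<Rightarrow> 'a \<times> 'b)) {}))"
    by (simp add: fadd_def case_prod_beta)
qed

lemma continuous_map_dewitt_tens_fadd:
  "continuous_map (prod_topology (dewitt_tens m) (dewitt_tens m)) (dewitt_tens m)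
     (\<lambda>(x, y). fadd x (y :: nat set \<Rightarrow> 'v::topological_monoid_add))"
proof (rule continuous_map_into_dewitt_tens)
  show "(\<lambda>(x, y). fadd x y) ` topspace (prod_topology (dewitt_tens m) (dewitt_tens m))
          \<subseteq> (gcar m :: (nat set \<Rightarrow> 'v) set)"
    by (auto simp: topspace_dewitt_tens intro: gcar_fadd)
  have "continuous_map (prod_topology (dewitt_tens m) (dewitt_tens m)) euclidean
          (\<lambda>p. fst p {} + (snd p :: nat set \<Rightarrow> 'v) {})"
    by (intro continuous_map_euclidean_add continuous_map_dewitt_tens_body
        continuous_map_compose[OF continuous_map_fst, unfolded o_def]
        continuous_map_compose[OF continuous_map_snd, unfolded o_def])
  then show "continuous_map (prod_topology (dewitt_tens m) (dewitt_tens m)) euclidean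
          (\<lambda>p. (case p of (x, y) \<Rightarrow> fadd x (y :: nat set \<Rightarrow> 'v)) {})"
    by (simp add: fadd_def case_prod_beta)
qed

lemma continuous_map_dewitt_ul_gact:
  fixes sc0 :: "'r::{comm_ring_1,topological_space} \<Rightarrow> 'a::{ab_group_add,topological_space} \<Rightarrow> 'a"
    and sc1 :: "'r \<Rightarrow> 'b::ab_group_add \<Rightarrow> 'b"
  assumes "module sc0" "module sc1" and "continuous_on UNIV (\<lambda>p. sc0 (fst p) (snd p))"
  shows "continuous_map (prod_topology (subtopology (lambda_top m) (lambda0 m)) (dewitt_ul m)) (dewitt_ul m)
     (\<lambda>(a, f). gact sc0 sc1 a f)"
proof (rule continuous_map_into_dewitt_ul)
  show "(\<lambda>(a, f). gact sc0 sc1 a f) ` topspace (prod_topology (subtopology (lambda_top m) (lambda0 m)) (dewitt_ul m))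
          \<subseteq> Eul m"
    using gact_Eul[OF assms(1,2)] by (auto simp: topspace_dewitt_ul)
  have "continuous_map (prod_topology (subtopology (lambda_top m) (lambda0 m)) (dewitt_ul m)) euclidean
          (\<lambda>p. sc0 (fst p {}) (fst (snd p {})))"
    using continuous_map_from_subtopology[OF continuous_map_lambda_top_eval] continuous_map_dewitt_ul_body
    by (intro continuous_map_euclidean_compose2[OF _ _ assms(3)]
        continuous_map_compose[OF continuous_map_fst, unfolded o_def]
        continuous_map_compose[OF continuous_map_snd, unfolded o_def])
  then show "continuous_map (prod_topology (subtopology (lambda_top m) (lambda0 m)) (dewitt_ul m)) euclidean
          (\<lambda>p. fst ((case p of (a, f) \<Rightarrow> gact sc0 sc1 a f) {}))"
    by (simp add: gact_empty case_prod_beta)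
qed

lemma continuous_map_dewitt_tens_gact:
  fixes sc0 :: "'r::{comm_ring_1,topological_space} \<Rightarrow> 'a::{ab_group_add,topological_space} \<Rightarrow> 'a"
    and sc1 :: "'r \<Rightarrow> 'b::{ab_group_add,topological_space} \<Rightarrow> 'b"
  assumes "module sc0" "module sc1"
    and cont0: "continuous_on UNIV (\<lambda>p. sc0 (fst p) (snd p))"
    and cont1: "continuous_on UNIV (\<lambda>p. sc1 (fst p) (snd p))"
  shows "continuous_map (prod_topology (lambda_top m) (dewitt_tens m)) (dewitt_tens m)
     (\<lambda>(a, f). gact sc0 sc1 a f)"
proof (rule continuous_map_into_dewitt_tens)
  show "(\<lambda>(a, f). gact sc0 sc1 a f) ` topspace (prod_topology (lambda_top m) (dewitt_tens m)) \<subseteq> gcar m"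
    using gact_gcar[OF assms(1,2)] by (auto simp: topspace_dewitt_tens topspace_lambda_top)
  have "continuous_on UNIV ((\<lambda>p. sc0 (fst p) (snd p)) \<circ> (\<lambda>z::'r \<times> 'a \<times> 'b. (fst z, fst (snd z))))"
    and "continuous_on UNIV ((\<lambda>p. sc1 (fst p) (snd p)) \<circ> (\<lambda>z::'r \<times> 'a \<times> 'b. (fst z, snd (snd z))))"
    by (intro continuous_on_compose continuous_intros continuous_on_subset[OF cont0]
        continuous_on_subset[OF cont1] subset_UNIV)+
  then have scale_fst: "continuous_on UNIV (\<lambda>z::'r \<times> 'a \<times> 'b. sc0 (fst z) (fst (snd z)))"
    and scale_snd: "continuous_on UNIV (\<lambda>z::'r \<times> 'a \<times> 'b. sc1 (fst z) (snd (snd z)))"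
    by (simp_all add: o_def)
  let ?X = "prod_topology (lambda_top m) (dewitt_tens m)"
  have "continuous_map ?X euclidean (\<lambda>p. (fst p :: nat set \<Rightarrow> 'r) {})"
    and "continuous_map ?X euclidean (\<lambda>p. (snd p :: nat set \<Rightarrow> 'a \<times> 'b) {})"
    by (intro continuous_map_compose[OF continuous_map_fst continuous_map_lambda_top_eval, unfolded o_def]
        continuous_map_compose[OF continuous_map_snd continuous_map_dewitt_tens_body, unfolded o_def])+
  then have "continuous_map ?X (prod_topology euclidean euclidean)
          (\<lambda>p. (sc0 (fst p {}) (fst (snd p {})), sc1 (fst p {}) (snd (snd p {}))))"
    by (intro continuous_map_pairedI continuous_map_euclidean_compose2[OF _ _ scale_fst]
        continuous_map_euclidean_compose2[OF _ _ scale_snd])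
  then show "continuous_map ?X euclidean (\<lambda>p. (case p of (a, f) \<Rightarrow> gact sc0 sc1 a f) {})"
    by (simp add: gact_empty case_prod_beta)
qed

theorem lemma2p5:
  fixes sc0 :: "'r::{comm_ring_1, topological_ab_group_add, topological_semigroup_mult, t2_space}
                  \<Rightarrow> 'a::{topological_ab_group_add, t2_space} \<Rightarrow> 'a"
    and sc1 :: "'r \<Rightarrow> 'b::{topological_ab_group_add, t2_space} \<Rightarrow> 'b"
    and m :: enat
  assumes dense_units: "closure {u::'r. u dvd 1} = UNIV"
    and mod0: "module sc0" and mod1: "module sc1"
    and cont0: "continuous_on UNIV (\<lambda>p. sc0 (fst p) (snd p))"
    and cont1: "continuous_on UNIV (\<lambda>p. sc1 (fst p) (snd p))"
  shows "(\<forall>U. U \<subseteq> (Eul m :: (nat set \<Rightarrow> 'a \<times> 'b) set) \<longrightarrow>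
            (openin (dewitt_ul m) U \<longleftrightarrow>
             (\<exists>V. open V \<and> U = {fadd (tens1 (v, 0)) x | v x. v \<in> V \<and> x \<in> Eul_plus m})))
       \<and> (\<forall>U. U \<subseteq> (gcar m :: (nat set \<Rightarrow> 'a \<times> 'b) set) \<longrightarrow>
            (openin (dewitt_tens m) U \<longleftrightarrow>
             (\<exists>V. open V \<and> U = {fadd (tens1 v) x | v x. v \<in> V \<and> x \<in> Etens_plus m})))
       \<and> continuous_map (prod_topology (dewitt_ul m) (dewitt_ul m)) (dewitt_ul m)
            (\<lambda>(x, y). fadd x (y :: nat set \<Rightarrow> 'a \<times> 'b))
       \<and> continuous_map (prod_topology (subtopology (lambda_top m) (lambda0 m)) (dewitt_ul m)) (dewitt_ul m)
            (\<lambda>(a, f). gact sc0 sc1 (a :: nat set \<Rightarrow> 'r) (f :: nat set \<Rightarrow> 'a \<times> 'b))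
       \<and> continuous_map (prod_topology (dewitt_tens m) (dewitt_tens m)) (dewitt_tens m)
            (\<lambda>(x, y). fadd x (y :: nat set \<Rightarrow> 'a \<times> 'b))
       \<and> continuous_map (prod_topology (lambda_top m) (dewitt_tens m)) (dewitt_tens m)
            (\<lambda>(a, f). gact sc0 sc1 (a :: nat set \<Rightarrow> 'r) (f :: nat set \<Rightarrow> 'a \<times> 'b))"
  by (intro conjI allI impI openin_dewitt_ul_iff openin_dewitt_tens_iff continuous_map_dewitt_ul_fadd
      continuous_map_dewitt_tens_fadd continuous_map_dewitt_ul_gact[OF mod0 mod1 cont0]
      continuous_map_dewitt_tens_gact[OF mod0 mod1 cont0 cont1])

end
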